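(* Let $m\ge1$ and $n\in\mathbb{Z}$. Suppose the boxes $b_0,\ldots,b_{m-1}$ are independent integer variables, each $b_i$ ranging over the whole integer interval $\{u_i,\ldots,v_i\}$, with $\sum_i u_i\le n\le\sum_i v_i$. Then there is no integer sequence $T=(t_0,\ldots,t_{m-1})$ with $\sum_i t_i<n-m+1$ such that for every admissible $B$ with $\sum_i b_i\le n$ and every $l\in\{1,\ldots,m\}$ there exists $i$ with $\sum_{j=i}^{i+l'-1}b_j\le l'-1+\sum_{j=i}^{i+l'-1}t_j$ for all $l'\in\{1,\ldots,l\}$.
   Context: Indices are taken modulo $m$ (ring arrangement). *)

theory Defs
  imports Main
begin

definition cyc_sum :: "nat \<Rightarrow> (nat \<Rightarrow> int) \<Rightarrow> nat \<Rightarrow> nat \<Rightarrow> int" where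
  "cyc_sum m x i l = (\<Sum>j = i..<i + l. x (j mod m))"

end

theory Submission
  imports Defs
begin

text \<open>A full cyclic window sums every entry once, so the hypothesis on \<open>T\<close>
  would give \<open>n \<le> m - 1 + \<Sum>t\<^sub>i < n\<close>.\<close>

lemma exists_in_box_with_sum:
  fixes u v :: "'a \<Rightarrow> int"
  assumes "finite A" and "\<forall>i\<in>A. u i \<le> v i"
    and "(\<Sum>i\<in>A. u i) \<le> n" and "n \<le> (\<Sum>i\<in>A. v i)"
  shows "\<exists>b. (\<forall>i\<in>A. u i \<le> b i \<and> b i \<le> v i) \<and> (\<Sum>i\<in>A. b i) = n"
  using assms
proof (induction A arbitrary: n rule: finite_induct)
  case empty
  then show ?case by auto
next
  case (insert a A)
  define c where "c = max (u a) (n - (\<Sum>i\<in>A. v i))"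
  have c: "u a \<le> c" "c \<le> v a"
    using insert by (auto simp: c_def)
  have "(\<Sum>i\<in>A. u i) \<le> n - c" "n - c \<le> (\<Sum>i\<in>A. v i)"
    using insert sum_mono[of A u v] by (auto simp: c_def max_def)
  with insert.IH insert.prems(1) obtain b
    where b: "\<forall>i\<in>A. u i \<le> b i \<and> b i \<le> v i" "(\<Sum>i\<in>A. b i) = n - c"
    by blast
  have "(\<Sum>i\<in>A. (b(a := c)) i) = (\<Sum>i\<in>A. b i)"
    using insert.hyps(2) by (intro sum.cong) auto
  with b c insert.hyps show ?case
    by (intro exI[of _ "b(a := c)"]) auto
qed

lemma cyc_sum_full_window: "cyc_sum m x i m = (\<Sum>j<m. x j)"
proof (induction i)
  case 0
  have "(\<Sum>j = 0..<m. x (j mod m)) = (\<Sum>j = 0..<m. x j)"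
    by (rule sum.cong) auto
  then show ?case by (simp add: cyc_sum_def atLeast0LessThan)
next
  case (Suc i)
  have "cyc_sum m x i m + x ((i + m) mod m) = x (i mod m) + cyc_sum m x (Suc i) m"
    unfolding cyc_sum_def by (simp add: sum.atLeast_Suc_lessThan)
  with Suc show ?case by simp
qed

theorem mainTheorem8:
  fixes m :: nat and n :: int and u v :: "nat \<Rightarrow> int"
  assumes "m \<ge> 1"
    and "\<forall>i<m. u i \<le> v i"
    and "(\<Sum>i<m. u i) \<le> n" and "n \<le> (\<Sum>i<m. v i)"
  shows "\<not> (\<exists>t :: nat \<Rightarrow> int. (\<Sum>i<m. t i) < n - int m + 1 \<and>
           (\<forall>b :: nat \<Rightarrow> int. (\<forall>i<m. u i \<le> b i \<and> b i \<le> v i) \<and> (\<Sum>i<m. b i) \<le> n \<longrightarrow>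
              (\<forall>l\<in>{1..m}. \<exists>i<m. \<forall>l'\<in>{1..l}.
                 cyc_sum m b i l' \<le> int l' - 1 + cyc_sum m t i l')))"
proof
  assume "\<exists>t :: nat \<Rightarrow> int. (\<Sum>i<m. t i) < n - int m + 1 \<and>
           (\<forall>b :: nat \<Rightarrow> int. (\<forall>i<m. u i \<le> b i \<and> b i \<le> v i) \<and> (\<Sum>i<m. b i) \<le> n \<longrightarrow>
              (\<forall>l\<in>{1..m}. \<exists>i<m. \<forall>l'\<in>{1..l}.
                 cyc_sum m b i l' \<le> int l' - 1 + cyc_sum m t i l'))"
  then obtain t where t_sum: "(\<Sum>i<m. t i) < n - int m + 1"
    and t_bound: "\<And>b. (\<forall>i<m. u i \<le> b i \<and> b i \<le> v i) \<and> (\<Sum>i<m. b i) \<le> n \<Longrightarrow>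
              \<forall>l\<in>{1..m}. \<exists>i<m. \<forall>l'\<in>{1..l}. cyc_sum m b i l' \<le> int l' - 1 + cyc_sum m t i l'"
    by blast
  obtain b where b_box: "\<forall>i<m. u i \<le> b i \<and> b i \<le> v i" and b_sum: "(\<Sum>i<m. b i) = n"
    using exists_in_box_with_sum[of "{..<m}" u v n] assms(2-4) by (auto simp: lessThan_iff)
  have "m \<in> {1..m}" using assms(1) by simp
  with t_bound[of b] b_box b_sum obtain i
    where "\<forall>l'\<in>{1..m}. cyc_sum m b i l' \<le> int l' - 1 + cyc_sum m t i l'"
    by (metis order_refl)
  with \<open>m \<in> {1..m}\<close> have "cyc_sum m b i m \<le> int m - 1 + cyc_sum m t i m" by blast
  with b_sum t_sum show False by (simp add: cyc_sum_full_window)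
qed

end
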